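(* Let $\underline t\in(\mathbb{C}^* )^4$ be such that $C_{\underline t}$ is smooth. Then every algebraic symplectic form on $C_{\underline t}$ is a constant multiple of the form $\Omega=dX_1\wedge dX_2\big/\frac{\partial R_{\underline t}}{\partial X_3}$.
   Context: With $\bar k_i=k_i-k_i^{-1}$, $\bar u_i=u_i-u_i^{-1}$ for $\underline t=(k_0,k_1,u_0,u_1)$, $R_{\underline t}=X_1X_2X_3-X_1^2-X_2^2-X_3^2+(\bar u_0\bar k_0+\bar k_1\bar u_1)X_1+(\bar u_1\bar u_0+\bar k_0\bar k_1)X_2+(\bar k_0\bar u_1+\bar k_1\bar u_0)X_3+\bar k_0^2+\bar k_1^2+\bar u_0^2+\bar u_1^2-\bar k_0\bar k_1\bar u_0\bar u_1+4$ and $C_{\underline t}=\{R_{\underline t}=0\}\subset\mathbb{C}^3$. The form $\Omega$ (defined where $\partial R_{\underline t}/\partial X_3\neq 0$) extends to a regular nowhere-vanishing 2-form on smooth $C_{\underline t}$. *)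

theory Defs
  imports Complex_Main
begin

type_synonym pt3 = "complex \<times> complex \<times> complex"

definition bar :: "complex \<Rightarrow> complex" where
  "bar k = k - inverse k"

text \<open>The polynomial R_t, with t = (k0,k1,u0,u1).\<close>
definition Rt :: "complex \<Rightarrow> complex \<Rightarrow> complex \<Rightarrow> complex \<Rightarrow> pt3 \<Rightarrow> complex" where
  "Rt k0 k1 u0 u1 p = (case p of (x1, x2, x3) \<Rightarrow>
     x1 * x2 * x3 - x1^2 - x2^2 - x3^2
     + (bar u0 * bar k0 + bar k1 * bar u1) * x1
     + (bar u1 * bar u0 + bar k0 * bar k1) * x2
     + (bar k0 * bar u1 + bar k1 * bar u0) * x3
     + (bar k0)^2 + (bar k1)^2 + (bar u0)^2 + (bar u1)^2
     - bar k0 * bar k1 * bar u0 * bar u1 + 4)"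

definition dR1 :: "complex \<Rightarrow> complex \<Rightarrow> complex \<Rightarrow> complex \<Rightarrow> pt3 \<Rightarrow> complex" where
  "dR1 k0 k1 u0 u1 p = (case p of (x1, x2, x3) \<Rightarrow>
     x2 * x3 - 2 * x1 + (bar u0 * bar k0 + bar k1 * bar u1))"
definition dR2 :: "complex \<Rightarrow> complex \<Rightarrow> complex \<Rightarrow> complex \<Rightarrow> pt3 \<Rightarrow> complex" where
  "dR2 k0 k1 u0 u1 p = (case p of (x1, x2, x3) \<Rightarrow>
     x1 * x3 - 2 * x2 + (bar u1 * bar u0 + bar k0 * bar k1))"
definition dR3 :: "complex \<Rightarrow> complex \<Rightarrow> complex \<Rightarrow> complex \<Rightarrow> pt3 \<Rightarrow> complex" where
  "dR3 k0 k1 u0 u1 p = (case p of (x1, x2, x3) \<Rightarrow>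
     x1 * x2 - 2 * x3 + (bar k0 * bar u1 + bar k1 * bar u0))"

definition Ct :: "complex \<Rightarrow> complex \<Rightarrow> complex \<Rightarrow> complex \<Rightarrow> pt3 set" where
  "Ct k0 k1 u0 u1 = {p. Rt k0 k1 u0 u1 p = 0}"

definition smooth_Ct :: "complex \<Rightarrow> complex \<Rightarrow> complex \<Rightarrow> complex \<Rightarrow> bool" where
  "smooth_Ct k0 k1 u0 u1 \<longleftrightarrow> (\<forall>p \<in> Ct k0 k1 u0 u1.
     (dR1 k0 k1 u0 u1 p, dR2 k0 k1 u0 u1 p, dR3 k0 k1 u0 u1 p) \<noteq> (0, 0, 0))"

definition tangent :: "complex \<Rightarrow> complex \<Rightarrow> complex \<Rightarrow> complex \<Rightarrow> pt3 \<Rightarrow> pt3 set" where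
  "tangent k0 k1 u0 u1 p = {v. case v of (v1, v2, v3) \<Rightarrow>
     dR1 k0 k1 u0 u1 p * v1 + dR2 k0 k1 u0 u1 p * v2 + dR3 k0 k1 u0 u1 p * v3 = 0}"

inductive poly3 :: "(pt3 \<Rightarrow> complex) \<Rightarrow> bool" where
  const: "poly3 (\<lambda>p. c)"
| coord1: "poly3 (\<lambda>p. fst p)"
| coord2: "poly3 (\<lambda>p. fst (snd p))"
| coord3: "poly3 (\<lambda>p. snd (snd p))"
| add: "poly3 f \<Longrightarrow> poly3 g \<Longrightarrow> poly3 (\<lambda>p. f p + g p)"
| mult: "poly3 f \<Longrightarrow> poly3 g \<Longrightarrow> poly3 (\<lambda>p. f p * g p)"

text \<open>A (pointwise-described) 2-form \<omega> p u v on C_t is algebraic if it is the restriction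
  to the tangent planes of C_t of a polynomial 2-form
  P1 dX2\<and>dX3 + P2 dX3\<and>dX1 + P3 dX1\<and>dX2 on C^3.\<close>
definition algebraic_2form :: "complex \<Rightarrow> complex \<Rightarrow> complex \<Rightarrow> complex \<Rightarrow>
    (pt3 \<Rightarrow> pt3 \<Rightarrow> pt3 \<Rightarrow> complex) \<Rightarrow> bool" where
  "algebraic_2form k0 k1 u0 u1 \<omega> \<longleftrightarrow>
     (\<exists>P1 P2 P3. poly3 P1 \<and> poly3 P2 \<and> poly3 P3 \<and>
       (\<forall>p \<in> Ct k0 k1 u0 u1. \<forall>u \<in> tangent k0 k1 u0 u1 p. \<forall>v \<in> tangent k0 k1 u0 u1 p.
          (case (u, v) of ((a1, a2, a3), (b1, b2, b3)) \<Rightarrow>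
             \<omega> p u v = P1 p * (a2 * b3 - a3 * b2) + P2 p * (a3 * b1 - a1 * b3)
                      + P3 p * (a1 * b2 - a2 * b1))))"

text \<open>Symplectic: nondegenerate on every tangent plane (closedness is automatic on a surface).\<close>
definition algebraic_symplectic :: "complex \<Rightarrow> complex \<Rightarrow> complex \<Rightarrow> complex \<Rightarrow>
    (pt3 \<Rightarrow> pt3 \<Rightarrow> pt3 \<Rightarrow> complex) \<Rightarrow> bool" where
  "algebraic_symplectic k0 k1 u0 u1 \<omega> \<longleftrightarrow> algebraic_2form k0 k1 u0 u1 \<omega> \<and>
     (\<forall>p \<in> Ct k0 k1 u0 u1. \<forall>u \<in> tangent k0 k1 u0 u1 p. u \<noteq> (0, 0, 0) \<longrightarrow>
        (\<exists>v \<in> tangent k0 k1 u0 u1 p. \<omega> p u v \<noteq> 0))"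

definition Omega :: "complex \<Rightarrow> complex \<Rightarrow> complex \<Rightarrow> complex \<Rightarrow> pt3 \<Rightarrow> pt3 \<Rightarrow> pt3 \<Rightarrow> complex" where
  "Omega k0 k1 u0 u1 p u v = (case (u, v) of ((a1, a2, a3), (b1, b2, b3)) \<Rightarrow>
     (a1 * b2 - a2 * b1) / dR3 k0 k1 u0 u1 p)"

end

theory Submission
  imports Defs "HOL-Computational_Algebra.Fundamental_Theorem_Algebra"
begin

text \<open>Contracting an algebraic 2-form \<open>\<omega> = P1 dX2\<and>dX3 + P2 dX3\<and>dX1 + P3 dX1\<and>dX2\<close> with the
  gradient \<open>g\<close> of \<open>R\<close> gives the polynomial \<open>f = P \<bullet> g\<close>, and on every tangent plane
  \<open>\<omega>(u, v) g = f (u \<times> v)\<close>. Smoothness and nondegeneracy make \<open>f\<close> vanish nowhere on \<open>C\<close>, so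
  \<open>\<omega> = f \<Omega>\<close> and it remains to see that a polynomial without zeros on the affine cubic
  surface is constant there.

  For generic \<open>a\<close> the slice \<open>x = a\<close> is a smooth conic \<open>s t = \<kappa>\<close>, parametrised by
  \<open>t \<in> \<complex>\<^sup>*\<close> once \<open>a = l + 1/l\<close>. Uniformly in \<open>l\<close>, a polynomial without zeros restricts to
  a monomial in \<open>t\<close> (after clearing a denominator in \<open>l\<close>), and the involution
  \<open>(l, t) \<mapsto> (1/l, \<kappa>/t)\<close> of the parametrisation forces its degree to be \<open>0\<close>. Generic slices in
  the three coordinate directions connect all points off finitely many special slices, and
  every point of a special slice lies on a polynomial curve in that slice along which \<open>z\<close>
  is nonconstant, hence non-special for all but finitely many parameters.\<close>

section \<open>Polynomials in one, two and three variables\<close>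

lemma poly3_subst:
  assumes "poly3 f" "poly3 g1" "poly3 g2" "poly3 g3"
  shows "poly3 (\<lambda>p. f (g1 p, g2 p, g3 p))"
  using assms(1) by induction (auto intro: poly3.intros assms(2-4))

lemma poly3_along_curve:
  assumes "poly3 f"
  shows "\<exists>P. \<forall>\<tau>. f (poly p1 \<tau>, poly p2 \<tau>, poly p3 \<tau>) = poly P \<tau>"
  using assms
proof induction
  case (const c)
  show ?case by (rule exI[of _ "[:c:]"]) simp
next
  case (add f g)
  then obtain P Q where "\<forall>\<tau>. f (poly p1 \<tau>, poly p2 \<tau>, poly p3 \<tau>) = poly P \<tau>"
    "\<forall>\<tau>. g (poly p1 \<tau>, poly p2 \<tau>, poly p3 \<tau>) = poly Q \<tau>" by blast
  then show ?case by (intro exI[of _ "P + Q"]) simp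
next
  case (mult f g)
  then obtain P Q where "\<forall>\<tau>. f (poly p1 \<tau>, poly p2 \<tau>, poly p3 \<tau>) = poly P \<tau>"
    "\<forall>\<tau>. g (poly p1 \<tau>, poly p2 \<tau>, poly p3 \<tau>) = poly Q \<tau>" by blast
  then show ?case by (intro exI[of _ "P * Q"]) simp
qed (auto intro: exI[of _ p1] exI[of _ p2] exI[of _ p3])

lemma poly3_dR:
  "poly3 (dR1 k0 k1 u0 u1)" "poly3 (dR2 k0 k1 u0 u1)" "poly3 (dR3 k0 k1 u0 u1)"
proof -
  have "dR1 k0 k1 u0 u1 = (\<lambda>p. fst (snd p) * snd (snd p) + ((-2) * fst p + (bar u0 * bar k0 + bar k1 * bar u1)))"
    "dR2 k0 k1 u0 u1 = (\<lambda>p. fst p * snd (snd p) + ((-2) * fst (snd p) + (bar u1 * bar u0 + bar k0 * bar k1)))"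
    "dR3 k0 k1 u0 u1 = (\<lambda>p. fst p * fst (snd p) + ((-2) * snd (snd p) + (bar k0 * bar u1 + bar k1 * bar u0)))"
    unfolding dR1_def dR2_def dR3_def by (auto split: prod.splits)
  then show "poly3 (dR1 k0 k1 u0 u1)" "poly3 (dR2 k0 k1 u0 u1)" "poly3 (dR3 k0 k1 u0 u1)"
    by (simp_all only:) (intro poly3.intros)+
qed

lemma poly_const_if_cofinite:
  fixes P :: "complex poly"
  assumes "finite T" "\<And>\<tau>. \<tau> \<notin> T \<Longrightarrow> poly P \<tau> = c"
  shows "poly P x = c"
proof -
  have "infinite (- T)" using assms(1) by (simp add: infinite_UNIV_char_0)
  moreover have "- T \<subseteq> {\<tau>. poly (P - [:c:]) \<tau> = 0}" using assms(2) by auto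
  ultimately have "infinite {\<tau>. poly (P - [:c:]) \<tau> = 0}" using finite_subset by blast
  then have "P - [:c:] = 0" using poly_roots_finite by blast
  then show ?thesis by simp
qed

lemma finite_poly_preimage:
  fixes p :: "complex poly"
  assumes "0 < degree p" "finite S"
  shows "finite {\<tau>. poly p \<tau> \<in> S}"
proof -
  have "p - [:b:] \<noteq> 0" for b
    using assms(1) by auto
  then have "finite (\<Union>b\<in>S. {\<tau>. poly (p - [:b:]) \<tau> = 0})"
    using assms(2) poly_roots_finite by blast
  moreover have "{\<tau>. poly p \<tau> \<in> S} = (\<Union>b\<in>S. {\<tau>. poly (p - [:b:]) \<tau> = 0})" by auto
  ultimately show ?thesis by simp
qed

lemma monom_if_no_nonzero_roots:
  fixes G :: "complex poly"
  assumes "\<And>t. t \<noteq> 0 \<Longrightarrow> poly G t \<noteq> 0"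
  obtains c m where "G = monom c m"
proof -
  have "G \<noteq> 0" using assms[of 1] by auto
  then obtain H where H: "G = [:- 0, 1:] ^ order 0 G * H" "\<not> [:- 0, 1:] dvd H"
    using order_decomp by blast
  have "poly H t \<noteq> 0" for t
  proof (cases "t = 0")
    case True
    then show ?thesis using H(2) poly_eq_0_iff_dvd by blast
  next
    case False
    then have "poly G t \<noteq> 0" using assms by blast
    then show ?thesis by (subst (asm) H(1)) simp
  qed
  then have "degree H = 0" using fundamental_theorem_of_algebra constant_degree by blast
  then obtain c where "H = [:c:]" by (metis degree_0_id)
  then have "G = monom c (order 0 G)"
    using H(1) by (simp add: monom_altdef)
  then show ?thesis by (rule that)
qed

lemma power_eq_power_imp_exp_eq:
  fixes a b :: complex
  assumes "\<And>s. s \<noteq> 0 \<Longrightarrow> a * s ^ i = b * s ^ j" "b \<noteq> 0"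
  shows "i = j"
proof -
  have "a = b" using assms(1)[of 1] by simp
  then have "(2::complex) ^ i = 2 ^ j" using assms(1)[of 2] assms(2) by simp
  then have "of_nat (2 ^ i) = (of_nat (2 ^ j) :: complex)" by simp
  then have "(2::nat) ^ i = 2 ^ j" by (simp only: of_nat_eq_iff)
  then show ?thesis by simp
qed

lemma const_if_monomial_inversion:
  fixes F :: "complex \<Rightarrow> complex"
  assumes direct: "\<And>s. s \<noteq> 0 \<Longrightarrow> F s * d * s^N = c * s^m"
    and inverted: "\<And>s. s \<noteq> 0 \<Longrightarrow> F s * d' * (k / s)^N = c' * (k / s)^m"
    and nonzero: "\<And>s. s \<noteq> 0 \<Longrightarrow> F s \<noteq> 0" "d \<noteq> 0" "d' \<noteq> 0" "k \<noteq> 0"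
    and "t \<noteq> 0"
  shows "F t = F 1"
proof -
  \<comment> \<open>\<open>F s\<close> is a multiple of both \<open>s^(m - N)\<close> and \<open>s^(N - m)\<close>, so \<open>m = N\<close>.\<close>
  have inverted': "F s * d' * k^N * s^m = c' * k^m * s^N" if "s \<noteq> 0" for s
    using inverted[OF that] that by (simp add: power_divide field_simps)
  have "(d * c' * k^m) * s^(2 * N) = (c * d' * k^N) * s^(2 * m)" if "s \<noteq> 0" for s
  proof -
    have "F s * ((d * c' * k^m) * s^(2 * N)) = (F s * d * s^N) * (c' * k^m * s^N)"
      by (simp only: mult_2 power_add) (simp add: algebra_simps)
    also have "\<dots> = (c * s^m) * (F s * d' * k^N * s^m)"
      using direct[OF that] inverted'[OF that] by simp
    also have "\<dots> = F s * ((c * d' * k^N) * s^(2 * m))"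
      by (simp only: mult_2 power_add) (simp add: algebra_simps)
    finally show ?thesis using nonzero(1)[OF that] by simp
  qed
  moreover have "c * d' * k^N \<noteq> 0"
    using direct[of 1] nonzero(1)[of 1] nonzero(2-4) by auto
  ultimately have "2 * N = 2 * m" by (rule power_eq_power_imp_exp_eq)
  then have "F t * d = c" "F 1 * d = c" using direct[OF \<open>t \<noteq> 0\<close>] direct[of 1] \<open>t \<noteq> 0\<close> by simp_all
  then show ?thesis using \<open>d \<noteq> 0\<close> by (metis mult_cancel_right)
qed

lemma quadratic_root: "\<exists>z::complex. z^2 + b * z + c = 0"
proof -
  have "\<not> constant (poly [:c, b, 1:])" using constant_degree by force
  then obtain z where "poly [:c, b, 1:] z = 0" using fundamental_theorem_of_algebra by blast
  then show ?thesis by (intro exI[of _ z]) (simp add: algebra_simps power2_eq_square)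
qed

text \<open>\<open>P\<close> is read as a polynomial in \<open>t\<close> with coefficients in \<open>\<complex>[l]\<close>.\<close>

definition poly2 :: "complex poly poly \<Rightarrow> complex \<Rightarrow> complex \<Rightarrow> complex" where
  "poly2 P l t = poly (poly P [:t:]) l"

lemma poly2_add [simp]: "poly2 (P + Q) l t = poly2 P l t + poly2 Q l t"
  and poly2_mult [simp]: "poly2 (P * Q) l t = poly2 P l t * poly2 Q l t"
  and poly2_power [simp]: "poly2 (P ^ n) l t = poly2 P l t ^ n"
  and poly2_const [simp]: "poly2 [:q:] l t = poly q l"
  and poly2_one [simp]: "poly2 1 l t = 1"
  and poly2_var [simp]: "poly2 [:0, 1:] l t = t"
  by (simp_all add: poly2_def)

lemma poly2_map_poly: "poly2 P l t = poly (map_poly (\<lambda>q. poly q l) P) t"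
  unfolding poly2_def by (induction P) (auto simp: map_poly_pCons)

lemma poly2_monom: "poly2 (monom q m) l t = poly q l * t ^ m"
  by (simp add: poly2_def poly_monom)

lemma poly2_monomial_if_nonvanishing:
  assumes "finite X" and "\<And>l t. l \<notin> X \<Longrightarrow> t \<noteq> 0 \<Longrightarrow> poly2 P l t \<noteq> 0"
  obtains p m where "\<And>l t. poly2 P l t = poly p l * t ^ m"
proof -
  define J where "J = {j. coeff P j \<noteq> 0}"
  have "finite J"
    unfolding J_def by (rule finite_subset[of _ "{..degree P}"]) (auto intro: le_degree)
  define Q where "Q = (\<Prod>j\<in>J. coeff P j)"
  have "Q \<noteq> 0" unfolding Q_def using \<open>finite J\<close> by (simp add: J_def)
  obtain l0 where "l0 \<notin> X" "poly Q l0 \<noteq> 0"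
    using ex_new_if_finite[OF infinite_UNIV_char_0, of "X \<union> {l. poly Q l = 0}"]
      assms(1) poly_roots_finite[OF \<open>Q \<noteq> 0\<close>] by auto
  then have coeff_l0: "poly (coeff P j) l0 \<noteq> 0" if "j \<in> J" for j
    using that \<open>finite J\<close> unfolding Q_def by (auto simp: poly_prod)
  define G where "G = map_poly (\<lambda>q. poly q l0) P"
  have "poly G t \<noteq> 0" if "t \<noteq> 0" for t
    using assms(2)[OF \<open>l0 \<notin> X\<close> that] by (simp add: G_def poly2_map_poly)
  then obtain c m where G: "G = monom c m" by (rule monom_if_no_nonzero_roots)
  have "coeff P j = 0" if "j \<noteq> m" for j
  proof (rule ccontr)
    assume "coeff P j \<noteq> 0"
    then have "coeff G j \<noteq> 0" using coeff_l0 by (simp add: G_def coeff_map_poly J_def)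
    then show False using G that by simp
  qed
  then have "P = monom (coeff P m) m" by (intro poly_eqI) simp
  then show ?thesis using that poly2_monom by metis
qed

section \<open>Regular functions on the parameter space of the conic slices\<close>

text \<open>The ring \<open>\<complex>[l, t, 1/(l(l\<^sup>2 - 1)), 1/t]\<close> of regular functions on \<open>l \<notin> {0, 1, -1}\<close>, \<open>t \<noteq> 0\<close>.\<close>

definition regular :: "(complex \<Rightarrow> complex \<Rightarrow> complex) \<Rightarrow> bool" where
  "regular g \<longleftrightarrow> (\<exists>P M N. \<forall>l t. l \<noteq> 0 \<longrightarrow> l^2 \<noteq> 1 \<longrightarrow> t \<noteq> 0 \<longrightarrow>
      g l t * (l * (l^2 - 1))^M * t^N = poly2 P l t)"

lemma regularI:
  assumes "\<And>l t. l \<noteq> 0 \<Longrightarrow> l^2 \<noteq> 1 \<Longrightarrow> t \<noteq> 0 \<Longrightarrow> g l t * (l * (l^2 - 1))^M * t^N = poly2 P l t"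
  shows "regular g"
  using assms unfolding regular_def by blast

lemma regular_const: "regular (\<lambda>l t. c)"
  by (rule regularI[where P = "[:[:c:]:]" and M = 0 and N = 0]) simp

lemma regular_fst: "regular (\<lambda>l t. l)"
  by (rule regularI[where P = "[:[:0, 1:]:]" and M = 0 and N = 0]) simp

lemma regular_snd: "regular (\<lambda>l t. t)"
  by (rule regularI[where P = "[:0, 1:]" and M = 0 and N = 0]) simp

lemma regular_inverse_snd: "regular (\<lambda>l t. 1 / t)"
  by (rule regularI[where P = 1 and M = 0 and N = 1]) simp

lemma regular_inverse_denom: "regular (\<lambda>l t. 1 / (l * (l^2 - 1)))"
  by (rule regularI[where P = 1 and M = 1 and N = 0]) simp

definition denom_poly :: "complex poly poly" where
  "denom_poly = [:[:0, -1, 0, 1:]:]"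

lemma poly2_denom_poly [simp]: "poly2 denom_poly l t = l * (l^2 - 1)"
  by (simp add: denom_poly_def algebra_simps power2_eq_square)

lemma regular_add:
  assumes "regular f" "regular g"
  shows "regular (\<lambda>l t. f l t + g l t)"
proof -
  obtain P1 M1 N1 where f: "\<And>l t. l \<noteq> 0 \<Longrightarrow> l^2 \<noteq> 1 \<Longrightarrow> t \<noteq> 0 \<Longrightarrow>
      f l t * (l * (l^2 - 1))^M1 * t^N1 = poly2 P1 l t"
    using assms(1) unfolding regular_def by blast
  obtain P2 M2 N2 where g: "\<And>l t. l \<noteq> 0 \<Longrightarrow> l^2 \<noteq> 1 \<Longrightarrow> t \<noteq> 0 \<Longrightarrow>
      g l t * (l * (l^2 - 1))^M2 * t^N2 = poly2 P2 l t"
    using assms(2) unfolding regular_def by blast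
  let ?P = "P1 * denom_poly ^ M2 * [:0, 1:] ^ N2 + P2 * denom_poly ^ M1 * [:0, 1:] ^ N1"
  show ?thesis
  proof (rule regularI[where M = "M1 + M2" and N = "N1 + N2" and P = ?P])
    fix l t :: complex
    assume lt: "l \<noteq> 0" "l^2 \<noteq> 1" "t \<noteq> 0"
    have "(f l t + g l t) * (l * (l^2 - 1))^(M1 + M2) * t^(N1 + N2)
        = (f l t * (l * (l^2 - 1))^M1 * t^N1) * (l * (l^2 - 1))^M2 * t^N2
          + (g l t * (l * (l^2 - 1))^M2 * t^N2) * (l * (l^2 - 1))^M1 * t^N1"
      by (simp add: power_add algebra_simps)
    also have "\<dots> = poly2 ?P l t" using f[OF lt] g[OF lt] by simp
    finally show "(f l t + g l t) * (l * (l^2 - 1))^(M1 + M2) * t^(N1 + N2) = poly2 ?P l t" .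
  qed
qed

lemma regular_mult:
  assumes "regular f" "regular g"
  shows "regular (\<lambda>l t. f l t * g l t)"
proof -
  obtain P1 M1 N1 where f: "\<And>l t. l \<noteq> 0 \<Longrightarrow> l^2 \<noteq> 1 \<Longrightarrow> t \<noteq> 0 \<Longrightarrow>
      f l t * (l * (l^2 - 1))^M1 * t^N1 = poly2 P1 l t"
    using assms(1) unfolding regular_def by blast
  obtain P2 M2 N2 where g: "\<And>l t. l \<noteq> 0 \<Longrightarrow> l^2 \<noteq> 1 \<Longrightarrow> t \<noteq> 0 \<Longrightarrow>
      g l t * (l * (l^2 - 1))^M2 * t^N2 = poly2 P2 l t"
    using assms(2) unfolding regular_def by blast
  show ?thesis
  proof (rule regularI[where M = "M1 + M2" and N = "N1 + N2" and P = "P1 * P2"])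
    fix l t :: complex
    assume lt: "l \<noteq> 0" "l^2 \<noteq> 1" "t \<noteq> 0"
    have "(f l t * g l t) * (l * (l^2 - 1))^(M1 + M2) * t^(N1 + N2)
        = (f l t * (l * (l^2 - 1))^M1 * t^N1) * (g l t * (l * (l^2 - 1))^M2 * t^N2)"
      by (simp add: power_add algebra_simps)
    also have "\<dots> = poly2 (P1 * P2) l t" using f[OF lt] g[OF lt] by simp
    finally show "(f l t * g l t) * (l * (l^2 - 1))^(M1 + M2) * t^(N1 + N2) = poly2 (P1 * P2) l t" .
  qed
qed

lemma regular_cong:
  assumes "regular g" "\<And>l t. l \<noteq> 0 \<Longrightarrow> l^2 \<noteq> 1 \<Longrightarrow> t \<noteq> 0 \<Longrightarrow> f l t = g l t"
  shows "regular f"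
  using assms unfolding regular_def by metis

lemma regular_uminus: "regular f \<Longrightarrow> regular (\<lambda>l t. - f l t)"
  by (rule regular_cong[OF regular_mult[OF regular_const[of "-1"]]]) auto

lemma regular_diff: "regular f \<Longrightarrow> regular g \<Longrightarrow> regular (\<lambda>l t. f l t - g l t)"
  by (rule regular_cong[OF regular_add[OF _ regular_uminus]]) auto

lemma regular_power: "regular f \<Longrightarrow> regular (\<lambda>l t. f l t ^ n)"
  by (induction n) (simp_all add: regular_const regular_mult)

lemma regular_inverse_fst: "regular (\<lambda>l t. 1 / l)"
proof (rule regular_cong[OF regular_mult[OF regular_diff[OF regular_power[OF regular_fst]
        regular_const] regular_inverse_denom]])
  fix l t :: complex
  assume "l \<noteq> 0" "l^2 \<noteq> 1"
  then show "1 / l = (l^2 - 1) * (1 / (l * (l^2 - 1)))" by simp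
qed

lemma regular_divide_fst: "regular g \<Longrightarrow> regular (\<lambda>l t. g l t / l)"
  by (rule regular_cong[OF regular_mult[OF _ regular_inverse_fst]]) auto

lemma regular_divide_snd: "regular g \<Longrightarrow> regular (\<lambda>l t. g l t / t)"
  by (rule regular_cong[OF regular_mult[OF _ regular_inverse_snd]]) auto

lemma regular_poly3:
  assumes "poly3 f" "regular g1" "regular g2" "regular g3"
  shows "regular (\<lambda>l t. f (g1 l t, g2 l t, g3 l t))"
  using assms(1) by induction (simp_all add: regular_const regular_add regular_mult assms(2-4))

section \<open>Conic slices of the cubic surface\<close>

definition joukowski :: "complex \<Rightarrow> complex" where
  "joukowski l = l + 1 / l"

definition slice_scale :: "complex \<Rightarrow> complex" where
  "slice_scale l = l / (l^2 - 1)"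

lemma slice_scale_inverse:
  assumes "l \<noteq> 0" "l^2 \<noteq> 1"
  shows "(l - 1 / l) * slice_scale l = 1"
proof -
  have "l * l - 1 \<noteq> 0" using assms(2) by (simp add: power2_eq_square)
  then show ?thesis using assms(1) unfolding slice_scale_def by (simp add: field_simps power2_eq_square)
qed

lemma slice_scale_sq:
  assumes "l \<noteq> 0" "l^2 \<noteq> 1"
  shows "slice_scale l ^ 2 * (joukowski l ^ 2 - 4) = 1"
proof -
  have "joukowski l ^ 2 - 4 = (l - 1 / l)^2"
    using assms(1) unfolding joukowski_def by (simp add: power2_eq_square field_simps)
  then show ?thesis using slice_scale_inverse[OF assms] by (simp add: power_mult_distrib[symmetric] mult.commute)
qed

lemma joukowski_inverse: "joukowski (1 / l) = joukowski l"
  by (simp add: joukowski_def)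

lemma slice_scale_inverse_param: "slice_scale (1 / l) = - slice_scale l"
proof (cases "l = 0 \<or> l^2 = 1")
  case True
  then show ?thesis by (auto simp: slice_scale_def power_divide)
next
  case False
  then have "l * l - 1 \<noteq> 0" "1 - l * l \<noteq> 0" by (auto simp: power2_eq_square)
  then show ?thesis using False unfolding slice_scale_def by (simp add: field_simps power2_eq_square)
qed

lemma joukowski_surj:
  assumes "a^2 \<noteq> 4"
  obtains l where "l \<noteq> 0" "l^2 \<noteq> 1" "joukowski l = a"
proof -
  obtain l where l: "l^2 + (- a) * l + 1 = 0" using quadratic_root by blast
  then have "l \<noteq> 0" by auto
  have "l^2 \<noteq> 1"
  proof
    assume "l^2 = 1"
    then have "a * l = 2" using l by (simp add: algebra_simps)
    then have "(a * l)^2 = 4" by simp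
    then have "a^2 * l^2 = 4" by (simp add: power_mult_distrib)
    then show False using \<open>l^2 = 1\<close> assms by simp
  qed
  moreover have "joukowski l = a"
    using l \<open>l \<noteq> 0\<close> unfolding joukowski_def by (simp add: field_simps power2_eq_square)
  ultimately show ?thesis using that \<open>l \<noteq> 0\<close> by blast
qed

context
  fixes A B C E :: complex
begin

definition cubic :: "complex \<Rightarrow> complex \<Rightarrow> complex \<Rightarrow> complex" where
  "cubic x y z = x * y * z - x^2 - y^2 - z^2 + A * x + B * y + C * z + E"

definition cubic_surface :: "pt3 set" where
  "cubic_surface = {(x, y, z). cubic x y z = 0}"

lemma mem_cubic_surface [simp]:
  "p \<in> cubic_surface \<longleftrightarrow> cubic (fst p) (fst (snd p)) (snd (snd p)) = 0"
  by (cases p) (simp add: cubic_surface_def)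

lemma cubic_root_y: "\<exists>y. cubic x y z = 0"
proof -
  obtain y where "y^2 + (- (x * z + B)) * y + (x^2 + z^2 - A * x - C * z - E) = 0"
    using quadratic_root by blast
  then show ?thesis unfolding cubic_def by (intro exI[of _ y]) (simp add: algebra_simps power2_eq_square)
qed

lemma cubic_root_z: "\<exists>z. cubic x y z = 0"
proof -
  obtain z where "z^2 + (- (x * y + C)) * z + (x^2 + y^2 - A * x - B * y - E) = 0"
    using quadratic_root by blast
  then show ?thesis unfolding cubic_def by (intro exI[of _ z]) (simp add: algebra_simps power2_eq_square)
qed

text \<open>For \<open>l \<notin> {0, 1, -1}\<close> the slice \<open>x = l + 1/l\<close> of the surface is a conic with centre
  \<open>(center_y l, center_z l)\<close>. In the coordinates \<open>s = Y - l Z\<close>, \<open>t = Y - Z/l\<close> relative to the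
  centre, which \<open>slice_y\<close> and \<open>slice_z\<close> invert using \<open>slice_scale l = 1/(l - 1/l)\<close>, it reads
  \<open>s t = slice_const l\<close> (lemma \<open>cubic_slice\<close>); for \<open>slice_const l \<noteq> 0\<close> its points are
  \<open>slice_param l t\<close>, \<open>t \<noteq> 0\<close>, and \<open>slice_const l = 0\<close> exactly on the roots of
  \<open>degenerate_slice_poly\<close> (lemma \<open>slice_const_degenerate_poly\<close>).\<close>

definition center_y :: "complex \<Rightarrow> complex" where
  "center_y l = - (2 * B + joukowski l * C) * slice_scale l ^ 2"

definition center_z :: "complex \<Rightarrow> complex" where
  "center_z l = - (2 * C + joukowski l * B) * slice_scale l ^ 2"

definition slice_const :: "complex \<Rightarrow> complex" where
  "slice_const l = cubic (joukowski l) (center_y l) (center_z l)"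

definition slice_y :: "complex \<Rightarrow> complex \<Rightarrow> complex \<Rightarrow> complex" where
  "slice_y l s t = center_y l + (l * t - s / l) * slice_scale l"

definition slice_z :: "complex \<Rightarrow> complex \<Rightarrow> complex \<Rightarrow> complex" where
  "slice_z l s t = center_z l + (t - s) * slice_scale l"

definition slice_param :: "complex \<Rightarrow> complex \<Rightarrow> pt3" where
  "slice_param l t = (joukowski l, slice_y l (slice_const l / t) t, slice_z l (slice_const l / t) t)"

definition generic :: "complex \<Rightarrow> bool" where
  "generic l \<longleftrightarrow> l \<noteq> 0 \<and> l^2 \<noteq> 1 \<and> slice_const l \<noteq> 0"

definition degenerate_slice_poly :: "complex poly" where
  "degenerate_slice_poly = [:4 * E + B^2 + C^2, 4 * A + B * C, - 4 - E, - A, 1:]"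

definition special_slices :: "complex set" where
  "special_slices = {a. a^2 = 4 \<or> poly degenerate_slice_poly a = 0}"

lemma center_critical:
  assumes "l \<noteq> 0" "l^2 \<noteq> 1"
  shows "joukowski l * center_z l - 2 * center_y l + B = 0"
    "joukowski l * center_y l - 2 * center_z l + C = 0"
  using slice_scale_sq[OF assms] unfolding center_y_def center_z_def by algebra+

lemma cubic_shift_center:
  assumes "l \<noteq> 0" "l^2 \<noteq> 1"
  shows "cubic (joukowski l) (center_y l + Y) (center_z l + Z)
           = slice_const l - (Y - l * Z) * (Y - Z / l)"
proof -
  have "(Y - l * Z) * (Y - Z / l) = Y^2 - joukowski l * Y * Z + Z^2"
    using assms(1) unfolding joukowski_def by (simp add: field_simps power2_eq_square)
  then show ?thesis using center_critical[OF assms] unfolding slice_const_def cubic_def by algebra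
qed

lemma cubic_slice:
  assumes "l \<noteq> 0" "l^2 \<noteq> 1"
  shows "cubic (joukowski l) (slice_y l s t) (slice_z l s t) = slice_const l - s * t"
proof -
  let ?Y = "(l * t - s / l) * slice_scale l" and ?Z = "(t - s) * slice_scale l"
  have "?Y - l * ?Z = s * ((l - 1 / l) * slice_scale l)"
    "?Y - ?Z / l = t * ((l - 1 / l) * slice_scale l)"
    by (simp_all add: algebra_simps diff_divide_distrib)
  then have "?Y - l * ?Z = s" "?Y - ?Z / l = t" using slice_scale_inverse[OF assms] by simp_all
  then show ?thesis
    using cubic_shift_center[OF assms, of ?Y ?Z] unfolding slice_y_def slice_z_def by simp
qed

lemma slice_yz_surj:
  assumes "l \<noteq> 0" "l^2 \<noteq> 1"
  obtains s t where "slice_y l s t = y" "slice_z l s t = z"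
proof -
  let ?Y = "y - center_y l" and ?Z = "z - center_z l"
  have "(l * (?Y - ?Z / l) - (?Y - l * ?Z) / l) * slice_scale l = ?Y * ((l - 1 / l) * slice_scale l)"
    "((?Y - ?Z / l) - (?Y - l * ?Z)) * slice_scale l = ?Z * ((l - 1 / l) * slice_scale l)"
    using assms(1) by (simp_all add: field_simps)
  then have "slice_y l (?Y - l * ?Z) (?Y - ?Z / l) = y" "slice_z l (?Y - l * ?Z) (?Y - ?Z / l) = z"
    using slice_scale_inverse[OF assms] unfolding slice_y_def slice_z_def by simp_all
  then show ?thesis by (rule that)
qed

lemma slice_const_degenerate_poly:
  assumes "l \<noteq> 0" "l^2 \<noteq> 1"
  shows "slice_const l * (4 - joukowski l ^ 2) = poly degenerate_slice_poly (joukowski l)"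
  using slice_scale_sq[OF assms]
  unfolding slice_const_def cubic_def center_y_def center_z_def degenerate_slice_poly_def
  by simp algebra

lemma degenerate_slice_poly_nonzero: "degenerate_slice_poly \<noteq> 0"
proof
  assume "degenerate_slice_poly = 0"
  then have "coeff degenerate_slice_poly 4 = 0" by simp
  then show False unfolding degenerate_slice_poly_def by (simp add: numeral_eq_Suc)
qed

lemma finite_special_slices: "finite special_slices"
proof -
  have "special_slices \<subseteq> {a. poly [:-4, 0, 1:] a = 0} \<union> {a. poly degenerate_slice_poly a = 0}"
    unfolding special_slices_def by (auto simp: power2_eq_square)
  moreover have "finite ({a. poly [:-4, 0, 1:] a = 0} \<union> {a. poly degenerate_slice_poly a = 0})"
    using poly_roots_finite[OF degenerate_slice_poly_nonzero]
      poly_roots_finite[of "[:-4, 0, 1:] :: complex poly"] by simp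
  ultimately show ?thesis by (rule finite_subset)
qed

lemma finite_non_generic: "finite {l. \<not> generic l}"
proof -
  let ?R = "\<lambda>a. {l. poly [:1, - a, 1:] l = 0}"
  have "{l. \<not> generic l} \<subseteq> {0, 1, -1} \<union> (\<Union>a \<in> {a. poly degenerate_slice_poly a = 0}. ?R a)"
  proof
    fix l
    assume "l \<in> {l. \<not> generic l}"
    show "l \<in> {0, 1, -1} \<union> (\<Union>a \<in> {a. poly degenerate_slice_poly a = 0}. ?R a)"
    proof (cases "l = 0 \<or> l^2 = 1")
      case True
      then show ?thesis using power2_eq_1_iff by auto
    next
      case False
      then have "slice_const l = 0" using \<open>l \<in> {l. \<not> generic l}\<close> unfolding generic_def by auto
      then have "poly degenerate_slice_poly (joukowski l) = 0"
        using slice_const_degenerate_poly False by force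
      moreover have "l \<in> ?R (joukowski l)"
        using False unfolding joukowski_def by (simp add: field_simps)
      ultimately show ?thesis by blast
    qed
  qed
  moreover have "finite (?R a)" for a :: complex by (rule poly_roots_finite) simp
  then have "finite ({0, 1, -1} \<union> (\<Union>a \<in> {a. poly degenerate_slice_poly a = 0}. ?R a))"
    using poly_roots_finite[OF degenerate_slice_poly_nonzero] by blast
  ultimately show ?thesis by (rule finite_subset)
qed

lemma center_inverse_param: "center_y (1 / l) = center_y l" "center_z (1 / l) = center_z l"
  by (simp_all add: center_y_def center_z_def joukowski_inverse slice_scale_inverse_param)

lemma slice_const_inverse_param: "slice_const (1 / l) = slice_const l"
  by (simp add: slice_const_def joukowski_inverse center_inverse_param)

lemma slice_yz_inverse_param: "slice_y (1 / l) s t = slice_y l t s" "slice_z (1 / l) s t = slice_z l t s"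
  by (simp_all add: slice_y_def slice_z_def center_inverse_param slice_scale_inverse_param algebra_simps)

lemma slice_param_involution:
  assumes "generic l" "t \<noteq> 0"
  shows "slice_param (1 / l) (slice_const l / t) = slice_param l t"
  using assms unfolding generic_def slice_param_def
  by (simp add: joukowski_inverse slice_const_inverse_param slice_yz_inverse_param)

lemma slice_param_mem:
  assumes "generic l" "t \<noteq> 0"
  shows "slice_param l t \<in> cubic_surface"
  using assms cubic_slice[of l "slice_const l / t" t] unfolding generic_def slice_param_def by simp

lemma slice_param_surj:
  assumes "generic l" "(joukowski l, y, z) \<in> cubic_surface"
  obtains t where "t \<noteq> 0" "slice_param l t = (joukowski l, y, z)"
proof -
  have l: "l \<noteq> 0" "l^2 \<noteq> 1" "slice_const l \<noteq> 0" using assms(1) unfolding generic_def by auto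
  obtain s t where st: "slice_y l s t = y" "slice_z l s t = z" by (rule slice_yz_surj[OF l(1,2)])
  then have "s * t = slice_const l" using assms(2) cubic_slice[OF l(1,2), of s t] by simp
  then have "t \<noteq> 0" using l(3) by auto
  with \<open>s * t = slice_const l\<close> have "s = slice_const l / t" by (simp add: field_simps)
  then show ?thesis using that[OF \<open>t \<noteq> 0\<close>] st unfolding slice_param_def by simp
qed

lemma regular_slice_param:
  assumes "poly3 f"
  shows "regular (\<lambda>l t. f (slice_param l t))"
proof -
  have jouk: "regular (\<lambda>l t. joukowski l)"
    unfolding joukowski_def by (intro regular_add regular_fst regular_inverse_fst)
  have scale: "regular (\<lambda>l t. slice_scale l)"
  proof (rule regular_cong[OF regular_mult[OF regular_power[OF regular_fst] regular_inverse_denom]])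
    fix l t :: complex
    assume "l \<noteq> 0" "l^2 \<noteq> 1"
    then show "slice_scale l = l^2 * (1 / (l * (l^2 - 1)))" unfolding slice_scale_def
      by (simp add: power2_eq_square)
  qed
  have center: "regular (\<lambda>l t. center_y l)" "regular (\<lambda>l t. center_z l)"
    unfolding center_y_def center_z_def
    by (intro regular_mult regular_uminus regular_add regular_const regular_power jouk scale)+
  have const: "regular (\<lambda>l t. slice_const l)"
    unfolding slice_const_def cubic_def
    by (intro regular_add regular_diff regular_mult regular_power regular_const jouk center)
  have "regular (\<lambda>l t. slice_y l (slice_const l / t) t)"
    "regular (\<lambda>l t. slice_z l (slice_const l / t) t)"
    unfolding slice_y_def slice_z_def
    by (intro regular_add regular_mult regular_diff regular_divide_fst regular_divide_snd
        regular_fst regular_snd scale center const)+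
  then show ?thesis using regular_poly3[OF assms jouk] unfolding slice_param_def by blast
qed

lemma slice_param_monomial:
  assumes "poly3 f" "\<forall>p\<in>cubic_surface. f p \<noteq> 0"
  shows "\<exists>M N p m. \<forall>l t. l \<noteq> 0 \<longrightarrow> l^2 \<noteq> 1 \<longrightarrow> t \<noteq> 0 \<longrightarrow>
    f (slice_param l t) * (l * (l^2 - 1))^M * t^N = poly p l * t^m"
proof -
  obtain P M N where P: "\<And>l t. l \<noteq> 0 \<Longrightarrow> l^2 \<noteq> 1 \<Longrightarrow> t \<noteq> 0 \<Longrightarrow>
      f (slice_param l t) * (l * (l^2 - 1))^M * t^N = poly2 P l t"
    using regular_slice_param[OF assms(1)] unfolding regular_def by blast
  have "poly2 P l t \<noteq> 0" if "l \<notin> {l. \<not> generic l}" "t \<noteq> 0" for l t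
  proof -
    have "generic l" using that(1) by simp
    then have "l \<noteq> 0" "l^2 \<noteq> 1" unfolding generic_def by auto
    moreover have "f (slice_param l t) \<noteq> 0"
      using assms(2) slice_param_mem[OF \<open>generic l\<close> \<open>t \<noteq> 0\<close>] by blast
    ultimately show ?thesis using P[of l t] \<open>t \<noteq> 0\<close> by auto
  qed
  then obtain p m where "\<And>l t. poly2 P l t = poly p l * t^m"
    using poly2_monomial_if_nonvanishing[OF finite_non_generic] by blast
  then show ?thesis using P by (intro exI[of _ M] exI[of _ N] exI[of _ p] exI[of _ m]) simp
qed

lemma slice_param_const:
  assumes f: "poly3 f" "\<forall>p\<in>cubic_surface. f p \<noteq> 0"
    and l: "generic l" and "t \<noteq> 0"
  shows "f (slice_param l t) = f (slice_param l 1)"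
proof -
  obtain M N p m where main: "\<And>l t. l \<noteq> 0 \<Longrightarrow> l^2 \<noteq> 1 \<Longrightarrow> t \<noteq> 0 \<Longrightarrow>
      f (slice_param l t) * (l * (l^2 - 1))^M * t^N = poly p l * t^m"
    using slice_param_monomial[OF f] by blast
  have l': "l \<noteq> 0" "l^2 \<noteq> 1" "slice_const l \<noteq> 0" using l unfolding generic_def by auto
  then have inv: "1 / l \<noteq> 0" "(1 / l)^2 \<noteq> 1" by (auto simp: power_divide)
  have direct: "f (slice_param l s) * (l * (l^2 - 1))^M * s^N = poly p l * s^m" if "s \<noteq> 0" for s
    using main[OF l'(1,2) that] .
  have inverted: "f (slice_param l s) * (1 / l * ((1 / l)^2 - 1))^M * (slice_const l / s)^N
      = poly p (1 / l) * (slice_const l / s)^m" if "s \<noteq> 0" for s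
    using main[OF inv, of "slice_const l / s"] slice_param_involution[OF l that] that l'(3) by simp
  have nonzero: "f (slice_param l s) \<noteq> 0" if "s \<noteq> 0" for s
    using f(2) slice_param_mem[OF l that] by blast
  show ?thesis
    by (rule const_if_monomial_inversion[where F = "\<lambda>s. f (slice_param l s)", OF direct inverted nonzero])
      (use l' inv \<open>t \<noteq> 0\<close> in auto)
qed

lemma cubic_slice_const:
  assumes f: "poly3 f" "\<forall>p\<in>cubic_surface. f p \<noteq> 0"
    and "a \<notin> special_slices"
    and "(a, y, z) \<in> cubic_surface" "(a, y', z') \<in> cubic_surface"
  shows "f (a, y, z) = f (a, y', z')"
proof -
  have "a^2 \<noteq> 4" and nondeg: "poly degenerate_slice_poly a \<noteq> 0"
    using assms(3) unfolding special_slices_def by auto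
  obtain l where l: "l \<noteq> 0" "l^2 \<noteq> 1" "joukowski l = a" by (rule joukowski_surj[OF \<open>a^2 \<noteq> 4\<close>])
  have "generic l"
    using slice_const_degenerate_poly[OF l(1,2)] nondeg l unfolding generic_def by auto
  have "f (a, y1, z1) = f (slice_param l 1)" if "(a, y1, z1) \<in> cubic_surface" for y1 z1
  proof -
    have "(joukowski l, y1, z1) \<in> cubic_surface" using that l(3) by simp
    then obtain t where t: "t \<noteq> 0" "slice_param l t = (joukowski l, y1, z1)"
      by (rule slice_param_surj[OF \<open>generic l\<close>])
    have "f (slice_param l t) = f (slice_param l 1)"
      by (rule slice_param_const[OF f \<open>generic l\<close> t(1)])
    then show ?thesis using t(2) l(3) by simp
  qed
  then show ?thesis using assms(4,5) by simp
qed

lemma parabolic_slice_curve: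
  assumes "a^2 = 4" "(a, y0, z0) \<in> cubic_surface"
  shows "\<exists>p2 p3. poly p2 0 = y0 \<and> poly p3 0 = z0 \<and> 0 < degree p3 \<and>
           (\<forall>\<tau>. (a, poly p2 \<tau>, poly p3 \<tau>) \<in> cubic_surface)"
proof -
  define sigma where "sigma = a / 2"
  have "sigma^2 = 1" "a = 2 * sigma" using assms(1) unfolding sigma_def by (auto simp: power_divide)
  define beta where "beta = B * sigma + C"
  define E0 where "E0 = E + A * a - a^2"
  \<comment> \<open>A parabola in the coordinates \<open>(y - sigma z, z)\<close>, or two parallel lines if \<open>beta = 0\<close>.\<close>
  have slice: "cubic a y z = - ((y - sigma * z)^2) + B * (y - sigma * z) + beta * z + E0" for y z
    unfolding cubic_def beta_def E0_def \<open>a = 2 * sigma\<close> using \<open>sigma^2 = 1\<close>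
    by (simp add: algebra_simps power2_eq_square)
  define u0 where "u0 = y0 - sigma * z0"
  have base_point: "- (u0^2) + B * u0 + beta * z0 + E0 = 0" using assms(2) slice unfolding u0_def by simp
  show ?thesis
  proof (cases "beta = 0")
    case True
    have "(a, poly [:y0, sigma:] \<tau>, poly [:z0, 1:] \<tau>) \<in> cubic_surface" for \<tau>
      using base_point True unfolding u0_def by (simp add: slice algebra_simps)
    then show ?thesis by (intro exI[of _ "[:y0, sigma:]"] exI[of _ "[:z0, 1:]"]) simp
  next
    case False
    define q where "q = [:u0, 1:]"
    define p3 where "p3 = smult (1 / beta) (q^2 - smult B q - [:E0:])"
    define p2 where "p2 = q + smult sigma p3"
    have p3: "poly p3 \<tau> * beta = (u0 + \<tau>)^2 - B * (u0 + \<tau>) - E0" for \<tau>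
      unfolding p3_def q_def using False by (simp add: field_simps power2_eq_square)
    have "(a, poly p2 \<tau>, poly p3 \<tau>) \<in> cubic_surface" for \<tau>
    proof -
      have "poly p2 \<tau> - sigma * poly p3 \<tau> = u0 + \<tau>" unfolding p2_def q_def by simp
      then show ?thesis using p3[of \<tau>] by (simp add: slice algebra_simps)
    qed
    moreover have "poly p3 0 = z0"
    proof -
      have "poly p3 0 * beta = u0^2 - B * u0 - E0" using p3[of 0] by simp
      also have "\<dots> = z0 * beta" using base_point by (simp add: algebra_simps)
      finally have "poly p3 0 * beta = z0 * beta" .
      then show ?thesis using False by simp
    qed
    moreover have "poly p2 0 = y0" using calculation(2) unfolding p2_def q_def u0_def by simp
    moreover have "0 < degree p3"
    proof -
      have "coeff p3 2 = 1 / beta" unfolding p3_def q_def by (simp add: power2_eq_square numeral_eq_Suc)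
      then show ?thesis using False le_degree[of p3 2] by fastforce
    qed
    ultimately show ?thesis by blast
  qed
qed

lemma degenerate_slice_curve:
  assumes "a^2 \<noteq> 4" "poly degenerate_slice_poly a = 0"
    and "(a, y0, z0) \<in> cubic_surface"
  shows "\<exists>p2 p3. poly p2 0 = y0 \<and> poly p3 0 = z0 \<and> 0 < degree p3 \<and>
           (\<forall>\<tau>. (a, poly p2 \<tau>, poly p3 \<tau>) \<in> cubic_surface)"
proof -
  obtain l where l: "l \<noteq> 0" "l^2 \<noteq> 1" "joukowski l = a" by (rule joukowski_surj[OF assms(1)])
  have "slice_const l = 0"
    using slice_const_degenerate_poly[OF l(1,2)] assms(1,2) l(3) by auto
  \<comment> \<open>The slice is the pair of lines \<open>s t = 0\<close>; replacing \<open>l\<close> by \<open>1 / l\<close> swaps \<open>s\<close> and \<open>t\<close>.\<close>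
  obtain l' t where l': "l' \<noteq> 0" "l'^2 \<noteq> 1" "joukowski l' = a" "slice_const l' = 0"
    and yz: "slice_y l' 0 t = y0" "slice_z l' 0 t = z0"
  proof -
    obtain s t where st: "slice_y l s t = y0" "slice_z l s t = z0"
      by (rule slice_yz_surj[OF l(1,2)])
    then have "s * t = 0"
      using assms(3) cubic_slice[OF l(1,2), of s t] l(3) \<open>slice_const l = 0\<close> by simp
    then consider "s = 0" | "t = 0" by auto
    then show ?thesis
    proof cases
      case 1
      then show ?thesis using that l \<open>slice_const l = 0\<close> st by blast
    next
      case 2
      have "1 / l \<noteq> 0" "(1 / l)^2 \<noteq> 1" using l by (auto simp: power_divide)
      then show ?thesis using that[of "1 / l" s] l(3) \<open>slice_const l = 0\<close> st 2
        by (simp add: joukowski_inverse slice_const_inverse_param slice_yz_inverse_param)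
    qed
  qed
  define w where "w = slice_scale l'"
  have "w \<noteq> 0" using l'(1,2) unfolding w_def slice_scale_def by simp
  have line: "poly [:y0, l' * w:] \<tau> = slice_y l' 0 (t + \<tau>)"
    "poly [:z0, w:] \<tau> = slice_z l' 0 (t + \<tau>)" for \<tau>
    using yz unfolding slice_y_def slice_z_def w_def by (auto simp: algebra_simps)
  have "(a, slice_y l' 0 (t + \<tau>), slice_z l' 0 (t + \<tau>)) \<in> cubic_surface" for \<tau>
    using cubic_slice[OF l'(1,2), of 0 "t + \<tau>"] l'(3,4) by simp
  then have "(a, poly [:y0, l' * w:] \<tau>, poly [:z0, w:] \<tau>) \<in> cubic_surface" for \<tau>
    by (simp only: line)
  then show ?thesis using \<open>w \<noteq> 0\<close> by (intro exI[of _ "[:y0, l' * w:]"] exI[of _ "[:z0, w:]"]) simp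
qed

lemma special_slice_curve:
  assumes "a \<in> special_slices" "(a, y0, z0) \<in> cubic_surface"
  shows "\<exists>p2 p3. poly p2 0 = y0 \<and> poly p3 0 = z0 \<and> 0 < degree p3 \<and>
           (\<forall>\<tau>. (a, poly p2 \<tau>, poly p3 \<tau>) \<in> cubic_surface)"
proof (cases "a^2 = 4")
  case True
  then show ?thesis by (rule parabolic_slice_curve[OF _ assms(2)])
next
  case False
  then show ?thesis
    using assms degenerate_slice_curve unfolding special_slices_def by blast
qed

end

section \<open>Nowhere vanishing polynomials on the cubic surface\<close>

lemma cubic_swap12: "cubic A B C E x y z = cubic B A C E y x z"
  unfolding cubic_def by (simp add: algebra_simps)

lemma cubic_rotate: "cubic A B C E x y z = cubic C A B E z x y"
  unfolding cubic_def by (simp add: algebra_simps)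

lemma cubic_slice_const_y:
  assumes f: "poly3 f" "\<forall>p\<in>cubic_surface A B C E. f p \<noteq> 0"
    and "b \<notin> special_slices B A C E"
    and "(x, b, z) \<in> cubic_surface A B C E" "(x', b, z') \<in> cubic_surface A B C E"
  shows "f (x, b, z) = f (x', b, z')"
proof -
  define g where "g p = f (fst (snd p), fst p, snd (snd p))" for p :: pt3
  have g_poly: "poly3 g" unfolding g_def by (rule poly3_subst[OF f(1) poly3.coord2 poly3.coord1 poly3.coord3])
  have g_nonzero: "\<forall>p\<in>cubic_surface B A C E. g p \<noteq> 0"
  proof
    fix p :: pt3
    assume "p \<in> cubic_surface B A C E"
    then have "(fst (snd p), fst p, snd (snd p)) \<in> cubic_surface A B C E"
      using cubic_swap12[of A B C E "fst (snd p)" "fst p" "snd (snd p)"] by simp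
    then show "g p \<noteq> 0" using f(2) unfolding g_def by blast
  qed
  have mem: "(b, x, z) \<in> cubic_surface B A C E" "(b, x', z') \<in> cubic_surface B A C E"
    using assms(4,5) cubic_swap12[of A B C E x b z] cubic_swap12[of A B C E x' b z'] by simp_all
  have "g (b, x, z) = g (b, x', z')" by (rule cubic_slice_const[OF g_poly g_nonzero assms(3) mem])
  then show ?thesis unfolding g_def by simp
qed

lemma cubic_slice_const_z:
  assumes f: "poly3 f" "\<forall>p\<in>cubic_surface A B C E. f p \<noteq> 0"
    and "c \<notin> special_slices C A B E"
    and "(x, y, c) \<in> cubic_surface A B C E" "(x', y', c) \<in> cubic_surface A B C E"
  shows "f (x, y, c) = f (x', y', c)"
proof -
  define g where "g p = f (fst (snd p), snd (snd p), fst p)" for p :: pt3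
  have g_poly: "poly3 g" unfolding g_def by (rule poly3_subst[OF f(1) poly3.coord2 poly3.coord3 poly3.coord1])
  have g_nonzero: "\<forall>p\<in>cubic_surface C A B E. g p \<noteq> 0"
  proof
    fix p :: pt3
    assume "p \<in> cubic_surface C A B E"
    then have "(fst (snd p), snd (snd p), fst p) \<in> cubic_surface A B C E"
      using cubic_rotate[of A B C E "fst (snd p)" "snd (snd p)" "fst p"] by simp
    then show "g p \<noteq> 0" using f(2) unfolding g_def by blast
  qed
  have mem: "(c, x, y) \<in> cubic_surface C A B E" "(c, x', y') \<in> cubic_surface C A B E"
    using assms(4,5) cubic_rotate[of A B C E x y c] cubic_rotate[of A B C E x' y' c] by simp_all
  have "g (c, x, y) = g (c, x', y')" by (rule cubic_slice_const[OF g_poly g_nonzero assms(3) mem])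
  then show ?thesis unfolding g_def by simp
qed

lemma cubic_const_off_special:
  assumes f: "poly3 f" "\<forall>p\<in>cubic_surface A B C E. f p \<noteq> 0"
  obtains K where "\<And>x y z. (x, y, z) \<in> cubic_surface A B C E \<Longrightarrow>
    x \<notin> special_slices A B C E \<or> y \<notin> special_slices B A C E \<or> z \<notin> special_slices C A B E \<Longrightarrow>
    f (x, y, z) = K"
proof -
  obtain a0 where a0: "a0 \<notin> special_slices A B C E"
    using ex_new_if_finite[OF infinite_UNIV_char_0 finite_special_slices] by blast
  obtain b0 where b0: "b0 \<notin> special_slices B A C E"
    using ex_new_if_finite[OF infinite_UNIV_char_0 finite_special_slices] by blast
  obtain z0 where z0: "(a0, b0, z0) \<in> cubic_surface A B C E" using cubic_root_z by fastforce
  define K where "K = f (a0, b0, z0)"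
  have off_x: "f (x, y, z) = K" if "x \<notin> special_slices A B C E" "(x, y, z) \<in> cubic_surface A B C E"
    for x y z
  proof -
    obtain z1 where z1: "(x, b0, z1) \<in> cubic_surface A B C E" using cubic_root_z by fastforce
    show ?thesis
      using cubic_slice_const[OF f that(1) that(2) z1] cubic_slice_const_y[OF f b0 z1 z0]
      unfolding K_def by simp
  qed
  have off_y: "f (x, y, z) = K" if "y \<notin> special_slices B A C E" "(x, y, z) \<in> cubic_surface A B C E"
    for x y z
  proof -
    obtain z2 where z2: "(a0, y, z2) \<in> cubic_surface A B C E" using cubic_root_z by fastforce
    show ?thesis using cubic_slice_const_y[OF f that(1) that(2) z2] off_x[OF a0 z2] by simp
  qed
  have off_z: "f (x, y, z) = K" if "z \<notin> special_slices C A B E" "(x, y, z) \<in> cubic_surface A B C E"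
    for x y z
  proof -
    obtain y3 where y3: "(a0, y3, z) \<in> cubic_surface A B C E" using cubic_root_y by fastforce
    show ?thesis using cubic_slice_const_z[OF f that(1) that(2) y3] off_x[OF a0 y3] by simp
  qed
  show ?thesis by (rule that[of K]) (use off_x off_y off_z in blast)
qed

lemma cubic_unit_const:
  assumes f: "poly3 f" "\<forall>p\<in>cubic_surface A B C E. f p \<noteq> 0"
  shows "\<exists>K. \<forall>p\<in>cubic_surface A B C E. f p = K"
proof -
  obtain K where K: "\<And>x y z. (x, y, z) \<in> cubic_surface A B C E \<Longrightarrow>
    x \<notin> special_slices A B C E \<or> y \<notin> special_slices B A C E \<or> z \<notin> special_slices C A B E \<Longrightarrow>
    f (x, y, z) = K"
    using cubic_const_off_special[OF f] by blast
  have "f (x, y, z) = K" if p: "(x, y, z) \<in> cubic_surface A B C E" for x y z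
  proof (cases "x \<in> special_slices A B C E")
    case False
    then show ?thesis using K p by blast
  next
    case True
    obtain p2 p3 where curve: "poly p2 0 = y" "poly p3 0 = z" "0 < degree p3"
      "\<And>\<tau>. (x, poly p2 \<tau>, poly p3 \<tau>) \<in> cubic_surface A B C E"
      using special_slice_curve[OF True p] by blast
    obtain P where P: "\<And>\<tau>. f (poly [:x:] \<tau>, poly p2 \<tau>, poly p3 \<tau>) = poly P \<tau>"
      using poly3_along_curve[OF f(1)] by blast
    have "poly P \<tau> = K" if "\<tau> \<notin> {\<tau>. poly p3 \<tau> \<in> special_slices C A B E}" for \<tau>
      using K[OF curve(4)] P[of \<tau>] that by simp
    then have "poly P 0 = K"
      by (rule poly_const_if_cofinite[OF finite_poly_preimage[OF curve(3) finite_special_slices]])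
    then show ?thesis using P[of 0] curve(1,2) by simp
  qed
  then show ?thesis by auto
qed

section \<open>Algebraic symplectic forms\<close>

lemma cross_contraction:
  fixes g1 g2 g3 a1 a2 a3 b1 b2 b3 P1 P2 P3 :: complex
  assumes "g1 * a1 + g2 * a2 + g3 * a3 = 0" "g1 * b1 + g2 * b2 + g3 * b3 = 0"
  defines "w \<equiv> P1 * (a2 * b3 - a3 * b2) + P2 * (a3 * b1 - a1 * b3) + P3 * (a1 * b2 - a2 * b1)"
    and "f \<equiv> P1 * g1 + P2 * g2 + P3 * g3"
  shows "w * g1 = (a2 * b3 - a3 * b2) * f" "w * g2 = (a3 * b1 - a1 * b3) * f"
    "w * g3 = (a1 * b2 - a2 * b1) * f"
  using assms(1,2) unfolding w_def f_def by algebra+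

lemma algebraic_2form_contraction:
  assumes "algebraic_2form k0 k1 u0 u1 \<omega>"
  obtains f where "poly3 f"
    and "\<And>p a1 a2 a3 b1 b2 b3. p \<in> Ct k0 k1 u0 u1 \<Longrightarrow>
      (a1, a2, a3) \<in> tangent k0 k1 u0 u1 p \<Longrightarrow> (b1, b2, b3) \<in> tangent k0 k1 u0 u1 p \<Longrightarrow>
      \<omega> p (a1, a2, a3) (b1, b2, b3) * dR1 k0 k1 u0 u1 p = (a2 * b3 - a3 * b2) * f p \<and>
      \<omega> p (a1, a2, a3) (b1, b2, b3) * dR2 k0 k1 u0 u1 p = (a3 * b1 - a1 * b3) * f p \<and>
      \<omega> p (a1, a2, a3) (b1, b2, b3) * dR3 k0 k1 u0 u1 p = (a1 * b2 - a2 * b1) * f p"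
proof -
  obtain P1 P2 P3 where P: "poly3 P1" "poly3 P2" "poly3 P3"
    and \<omega>: "\<forall>p \<in> Ct k0 k1 u0 u1. \<forall>u \<in> tangent k0 k1 u0 u1 p. \<forall>v \<in> tangent k0 k1 u0 u1 p.
      (case (u, v) of ((a1, a2, a3), (b1, b2, b3)) \<Rightarrow>
         \<omega> p u v = P1 p * (a2 * b3 - a3 * b2) + P2 p * (a3 * b1 - a1 * b3) + P3 p * (a1 * b2 - a2 * b1))"
    using assms unfolding algebraic_2form_def by blast
  define f where "f p = P1 p * dR1 k0 k1 u0 u1 p + P2 p * dR2 k0 k1 u0 u1 p + P3 p * dR3 k0 k1 u0 u1 p"
    for p
  show ?thesis
  proof (rule that[of f])
    show "poly3 f" unfolding f_def using P poly3_dR by (intro poly3.intros)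
    fix p a1 a2 a3 b1 b2 b3
    assume p: "p \<in> Ct k0 k1 u0 u1" and a: "(a1, a2, a3) \<in> tangent k0 k1 u0 u1 p"
      and b: "(b1, b2, b3) \<in> tangent k0 k1 u0 u1 p"
    have "\<omega> p (a1, a2, a3) (b1, b2, b3)
        = P1 p * (a2 * b3 - a3 * b2) + P2 p * (a3 * b1 - a1 * b3) + P3 p * (a1 * b2 - a2 * b1)"
      using \<omega> p a b by fastforce
    moreover have "dR1 k0 k1 u0 u1 p * a1 + dR2 k0 k1 u0 u1 p * a2 + dR3 k0 k1 u0 u1 p * a3 = 0"
      "dR1 k0 k1 u0 u1 p * b1 + dR2 k0 k1 u0 u1 p * b2 + dR3 k0 k1 u0 u1 p * b3 = 0"
      using a b unfolding tangent_def by simp_all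
    ultimately show "\<omega> p (a1, a2, a3) (b1, b2, b3) * dR1 k0 k1 u0 u1 p = (a2 * b3 - a3 * b2) * f p \<and>
        \<omega> p (a1, a2, a3) (b1, b2, b3) * dR2 k0 k1 u0 u1 p = (a3 * b1 - a1 * b3) * f p \<and>
        \<omega> p (a1, a2, a3) (b1, b2, b3) * dR3 k0 k1 u0 u1 p = (a1 * b2 - a2 * b1) * f p"
      unfolding f_def using cross_contraction by simp
  qed
qed

lemma algebraic_symplectic_contraction:
  assumes "smooth_Ct k0 k1 u0 u1" "algebraic_symplectic k0 k1 u0 u1 \<omega>"
  obtains f where "poly3 f" "\<And>p. p \<in> Ct k0 k1 u0 u1 \<Longrightarrow> f p \<noteq> 0"
    and "\<And>p a1 a2 a3 b1 b2 b3. p \<in> Ct k0 k1 u0 u1 \<Longrightarrow>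
      (a1, a2, a3) \<in> tangent k0 k1 u0 u1 p \<Longrightarrow> (b1, b2, b3) \<in> tangent k0 k1 u0 u1 p \<Longrightarrow>
      \<omega> p (a1, a2, a3) (b1, b2, b3) * dR3 k0 k1 u0 u1 p = (a1 * b2 - a2 * b1) * f p"
proof -
  obtain f where "poly3 f" and contraction: "\<And>p a1 a2 a3 b1 b2 b3. p \<in> Ct k0 k1 u0 u1 \<Longrightarrow>
      (a1, a2, a3) \<in> tangent k0 k1 u0 u1 p \<Longrightarrow> (b1, b2, b3) \<in> tangent k0 k1 u0 u1 p \<Longrightarrow>
      \<omega> p (a1, a2, a3) (b1, b2, b3) * dR1 k0 k1 u0 u1 p = (a2 * b3 - a3 * b2) * f p \<and>
      \<omega> p (a1, a2, a3) (b1, b2, b3) * dR2 k0 k1 u0 u1 p = (a3 * b1 - a1 * b3) * f p \<and>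
      \<omega> p (a1, a2, a3) (b1, b2, b3) * dR3 k0 k1 u0 u1 p = (a1 * b2 - a2 * b1) * f p"
    using algebraic_2form_contraction assms(2) unfolding algebraic_symplectic_def by blast
  moreover have "f p \<noteq> 0" if p: "p \<in> Ct k0 k1 u0 u1" for p
  proof
    assume "f p = 0"
    let ?g1 = "dR1 k0 k1 u0 u1 p" and ?g2 = "dR2 k0 k1 u0 u1 p" and ?g3 = "dR3 k0 k1 u0 u1 p"
    have grad: "(?g1, ?g2, ?g3) \<noteq> (0, 0, 0)" using assms(1) p unfolding smooth_Ct_def by blast
    obtain a1 a2 a3 where a: "(a1, a2, a3) \<in> tangent k0 k1 u0 u1 p" "(a1, a2, a3) \<noteq> (0, 0, 0)"
    proof (cases "?g1 = 0")
      case True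
      then show ?thesis by (intro that[of 1 0 0]) (simp_all add: tangent_def)
    next
      case False
      then show ?thesis by (intro that[of ?g2 "- ?g1" 0]) (simp_all add: tangent_def algebra_simps)
    qed
    then obtain v where v: "v \<in> tangent k0 k1 u0 u1 p" "\<omega> p (a1, a2, a3) v \<noteq> 0"
      using assms(2) p unfolding algebraic_symplectic_def by blast
    obtain b1 b2 b3 where "v = (b1, b2, b3)" by (cases v)
    then have "\<omega> p (a1, a2, a3) v * ?g1 = 0" "\<omega> p (a1, a2, a3) v * ?g2 = 0"
      "\<omega> p (a1, a2, a3) v * ?g3 = 0"
      using contraction[OF p a(1)] v(1) \<open>f p = 0\<close> by simp_all
    then show False using v(2) grad by simp
  qed
  ultimately show ?thesis using that by blast
qed

lemma Ct_eq_cubic_surface: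
  "Ct k0 k1 u0 u1 = cubic_surface (bar u0 * bar k0 + bar k1 * bar u1) (bar u1 * bar u0 + bar k0 * bar k1)
     (bar k0 * bar u1 + bar k1 * bar u0)
     ((bar k0)^2 + (bar k1)^2 + (bar u0)^2 + (bar u1)^2 - bar k0 * bar k1 * bar u0 * bar u1 + 4)"
  by (auto simp: Ct_def Rt_def cubic_def algebra_simps split: prod.splits)

theorem corollary4p2:
  fixes k0 k1 u0 u1 :: complex
    and \<omega> :: "pt3 \<Rightarrow> pt3 \<Rightarrow> pt3 \<Rightarrow> complex"
  assumes "k0 \<noteq> 0" "k1 \<noteq> 0" "u0 \<noteq> 0" "u1 \<noteq> 0"
    and "smooth_Ct k0 k1 u0 u1"
    and "algebraic_symplectic k0 k1 u0 u1 \<omega>"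
  shows "\<exists>c::complex. \<forall>p \<in> Ct k0 k1 u0 u1. dR3 k0 k1 u0 u1 p \<noteq> 0 \<longrightarrow>
           (\<forall>u \<in> tangent k0 k1 u0 u1 p. \<forall>v \<in> tangent k0 k1 u0 u1 p.
              \<omega> p u v = c * Omega k0 k1 u0 u1 p u v)"
proof -
  obtain f where f: "poly3 f" "\<And>p. p \<in> Ct k0 k1 u0 u1 \<Longrightarrow> f p \<noteq> 0"
    and contraction: "\<And>p a1 a2 a3 b1 b2 b3. p \<in> Ct k0 k1 u0 u1 \<Longrightarrow>
      (a1, a2, a3) \<in> tangent k0 k1 u0 u1 p \<Longrightarrow> (b1, b2, b3) \<in> tangent k0 k1 u0 u1 p \<Longrightarrow>
      \<omega> p (a1, a2, a3) (b1, b2, b3) * dR3 k0 k1 u0 u1 p = (a1 * b2 - a2 * b1) * f p"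
    using algebraic_symplectic_contraction[OF assms(5,6)] by blast
  obtain K where K: "\<And>p. p \<in> Ct k0 k1 u0 u1 \<Longrightarrow> f p = K"
    using cubic_unit_const[OF f(1)] f(2) unfolding Ct_eq_cubic_surface by blast
  show ?thesis
  proof (intro exI[of _ K] ballI impI)
    fix p u v
    assume p: "p \<in> Ct k0 k1 u0 u1" and "dR3 k0 k1 u0 u1 p \<noteq> 0"
      and u: "u \<in> tangent k0 k1 u0 u1 p" and v: "v \<in> tangent k0 k1 u0 u1 p"
    obtain a1 a2 a3 b1 b2 b3 where uv: "u = (a1, a2, a3)" "v = (b1, b2, b3)"
      by (cases u, cases v)
    have "\<omega> p u v * dR3 k0 k1 u0 u1 p = (a1 * b2 - a2 * b1) * K"
      using contraction[OF p, of a1 a2 a3 b1 b2 b3] u v K[OF p] unfolding uv by simp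
    then show "\<omega> p u v = K * Omega k0 k1 u0 u1 p u v"
      using \<open>dR3 k0 k1 u0 u1 p \<noteq> 0\<close> unfolding uv Omega_def by (simp add: field_simps)
  qed
qed

end
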